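(* Let $n$ be a square-free integer with $n\neq 1$ and let $\lambda\geq 1$ be an integer. The action of the Hecke group $H(\lambda)$ on $\mathbb{Q}^*(\sqrt{n})$ has finitely many orbits if and only if $\lambda\in\{1,2\}$.
   Context: For a square-free integer $n\neq 1$, $\mathbb{Q}^*(\sqrt{n})=\left\{\frac{a+\sqrt{n}}{c}\;:\;a,c\in\mathbb{Z},\ c\neq 0,\ \frac{a^2-n}{c}\in\mathbb{Z}\right\}\subset\mathbb{Q}(\sqrt n)$ (inside $\mathbb{C}$ when $n<0$). For an integer $\lambda\geq 1$, $H(\lambda)$ is the group of linear fractional transformations generated by $x:z\mapsto -1/z$ and $w_\lambda:z\mapsto z+\lambda$; it acts on $\mathbb{Q}^*(\sqrt n)$ (both generators map $\mathbb{Q}^*(\sqrt n)$ into itself). *)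

theory Defs
  imports Complex_Main "HOL-Computational_Algebra.Squarefree"
begin

text \<open>Q*(sqrt n) as a subset of the complex numbers (csqrt n = i sqrt(-n) for n < 0).\<close>
definition Qstar :: "int \<Rightarrow> complex set" where
  "Qstar n = {(of_int a + csqrt (of_int n)) / of_int c | a c.
               c \<noteq> 0 \<and> c dvd (a^2 - n)}"

inductive_set hecke_group :: "int \<Rightarrow> (complex \<Rightarrow> complex) set" for lam :: int where
  hg_id: "id \<in> hecke_group lam"
| hg_x: "g \<in> hecke_group lam \<Longrightarrow> (\<lambda>z. - 1 / z) \<circ> g \<in> hecke_group lam"
| hg_w: "g \<in> hecke_group lam \<Longrightarrow> (\<lambda>z. z + of_int lam) \<circ> g \<in> hecke_group lam"
| hg_winv: "g \<in> hecke_group lam \<Longrightarrow> (\<lambda>z. z - of_int lam) \<circ> g \<in> hecke_group lam"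

definition hecke_orbit :: "int \<Rightarrow> complex \<Rightarrow> complex set" where
  "hecke_orbit lam z = {g z | g. g \<in> hecke_group lam}"

definition hecke_orbits :: "int \<Rightarrow> int \<Rightarrow> complex set set" where
  "hecke_orbits n lam = hecke_orbit lam ` Qstar n"

end

theory Submission
  imports Defs
begin

text \<open>
  For \<open>\<lambda> \<le> 2\<close> a point \<open>(a + \<surd>n)/c\<close> can be translated so that \<open>\<bar>a\<bar> \<le> \<bar>c\<bar>\<close>;
  then either \<open>\<bar>c\<bar> \<le> \<bar>n\<bar>\<close>, or \<open>z \<mapsto> -1/z\<close> produces a point \<open>(-a + \<surd>n)/b\<close>
  with \<open>bc = a\<^sup>2 - n\<close> and \<open>\<bar>b\<bar> < \<bar>c\<bar>\<close>. As in the reduction of binary quadratic forms,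
  every orbit thus meets the finite set of points with \<open>\<bar>a\<bar>, \<bar>c\<bar> \<le> \<bar>n\<bar>\<close>.

  For \<open>\<lambda> \<ge> 3\<close> a ping-pong argument applies to the strip \<open>1 < Re z < 2\<close>: along a
  reduced word, \<open>z \<mapsto> -1/z\<close> lands in the unit disc and a nontrivial translation lands
  in \<open>Re z < -1\<close> or \<open>Re z > 2\<close>, so no nontrivial element maps a point of the strip back
  into it. The points \<open>1 + 1/(r - \<surd>n)\<close> for large \<open>r\<close> lie in \<open>\<rat>*(\<surd>n)\<close> and in the strip,
  hence in pairwise distinct orbits.
\<close>

lemma hecke_group_comp:
  "h \<in> hecke_group lam \<Longrightarrow> g \<in> hecke_group lam \<Longrightarrow> h \<circ> g \<in> hecke_group lam"
  by (induction h rule: hecke_group.induct) (auto simp: comp_assoc intro: hecke_group.intros)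

lemma hecke_group_inversion: "(\<lambda>z. - 1 / z) \<in> hecke_group lam"
  using hecke_group.hg_x[OF hecke_group.hg_id] by (simp add: comp_def)

lemma hecke_group_translation: "(\<lambda>z. z + of_int (k * lam)) \<in> hecke_group lam"
proof (induction k rule: int_induct[where k = 0])
  case base
  show ?case using hecke_group.hg_id by (simp add: id_def)
next
  case (step1 k)
  from hecke_group.hg_w[OF step1(2)] show ?case by (simp add: comp_def algebra_simps)
next
  case (step2 k)
  from hecke_group.hg_winv[OF step2(2)] show ?case by (simp add: comp_def algebra_simps)
qed

lemma hecke_group_left_inverse:
  "g \<in> hecke_group lam \<Longrightarrow> \<exists>h\<in>hecke_group lam. \<forall>z. h (g z) = z"
proof (induction g rule: hecke_group.induct)
  case hg_id
  show ?case using hecke_group.hg_id by (metis id_apply)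
next
  case (hg_x g)
  then obtain h where "h \<in> hecke_group lam" "\<forall>z. h (g z) = z" by blast
  then show ?case by (intro bexI[of _ "h \<circ> (\<lambda>z. - 1 / z)"] hecke_group_comp hecke_group_inversion) auto
next
  case (hg_w g)
  then obtain h where "h \<in> hecke_group lam" "\<forall>z. h (g z) = z" by blast
  then show ?case
    using hecke_group_comp[OF _ hecke_group_translation[of "-1"]]
    by (intro bexI[of _ "h \<circ> (\<lambda>z. z + of_int (- 1 * lam))"]) auto
next
  case (hg_winv g)
  then obtain h where "h \<in> hecke_group lam" "\<forall>z. h (g z) = z" by blast
  then show ?case
    using hecke_group_comp[OF _ hecke_group_translation[of 1]]
    by (intro bexI[of _ "h \<circ> (\<lambda>z. z + of_int (1 * lam))"]) auto
qed

lemma hecke_orbit_self: "z \<in> hecke_orbit lam z"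
  unfolding hecke_orbit_def using hecke_group.hg_id by (metis (mono_tags) id_apply mem_Collect_eq)

lemma hecke_orbit_memI: "g \<in> hecke_group lam \<Longrightarrow> g z \<in> hecke_orbit lam z"
  unfolding hecke_orbit_def by blast

lemma hecke_orbit_apply:
  assumes "g \<in> hecke_group lam"
  shows "hecke_orbit lam (g z) = hecke_orbit lam z"
proof
  show "hecke_orbit lam (g z) \<subseteq> hecke_orbit lam z"
    unfolding hecke_orbit_def using hecke_group_comp[OF _ assms] by (auto, metis comp_apply)
next
  obtain h where "h \<in> hecke_group lam" "\<forall>z. h (g z) = z"
    using hecke_group_left_inverse[OF assms] by blast
  then show "hecke_orbit lam z \<subseteq> hecke_orbit lam (g z)"
    unfolding hecke_orbit_def using hecke_group_comp by (auto, metis comp_apply)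
qed

lemma hecke_orbit_eq:
  assumes "w \<in> hecke_orbit lam z"
  shows "hecke_orbit lam w = hecke_orbit lam z"
proof -
  obtain g where "g \<in> hecke_group lam" "w = g z"
    using assms unfolding hecke_orbit_def by blast
  then show ?thesis using hecke_orbit_apply by simp
qed

lemma squarefree_not_square:
  fixes n :: int
  assumes "squarefree n" "n \<noteq> 1"
  shows "a^2 \<noteq> n"
proof
  assume "a^2 = n"
  then have "is_unit a" using squarefreeD[OF assms(1)] by simp
  then have "a^2 = 1" by (simp add: is_unit_power_iff zdvd1_eq abs_square_eq_1)
  with \<open>a^2 = n\<close> assms(2) show False by simp
qed

lemma reduced_triple_bound:
  fixes a b c n :: int
  assumes "c \<noteq> 0" "n \<noteq> 0" "\<bar>a\<bar> \<le> \<bar>c\<bar>" "\<bar>c\<bar> \<le> \<bar>b\<bar>" "b * c = a^2 - n"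
  shows "\<bar>c\<bar> \<le> \<bar>n\<bar>"
proof -
  have "\<bar>c\<bar> * \<bar>c\<bar> \<le> \<bar>b\<bar> * \<bar>c\<bar>" using assms(4) by (rule mult_right_mono) simp
  then have c2_le: "c^2 \<le> \<bar>a^2 - n\<bar>" using assms(5) by (metis abs_mult power2_abs power2_eq_square)
  have "\<bar>c\<bar> * 1 \<le> \<bar>c\<bar> * \<bar>c\<bar>" using assms(1) by (intro mult_left_mono) auto
  then have c_le: "\<bar>c\<bar> \<le> c^2" by (simp add: power2_eq_square)
  have a2_le: "a^2 \<le> c^2" using assms(3) by (simp add: abs_le_square_iff)
  show ?thesis
  proof (cases "n > 0")
    case True
    have "a^2 < n"
    proof (rule ccontr)
      assume "\<not> a^2 < n"
      then have "\<bar>a^2 - n\<bar> = a^2 - n" by simp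
      then show False using c2_le a2_le True by linarith
    qed
    then have "c^2 \<le> n - a^2" using c2_le by simp
    then show ?thesis using c_le True zero_le_power2[of a] by linarith
  next
    case False
    then have n_neg: "n < 0" using assms(2) by simp
    show ?thesis
    proof (cases "\<bar>a\<bar> = \<bar>c\<bar>")
      case True
      then have "a^2 = c^2" by (metis power2_abs)
      then have "n = c * (c - b)" using assms(5) by (simp add: power2_eq_square algebra_simps)
      then have "c dvd n" by (rule dvdI)
      with assms(2) show ?thesis by (rule dvd_imp_le_int)
    next
      case False
      then have "\<bar>a\<bar>^2 \<le> (\<bar>c\<bar> - 1)^2" using assms(3) by (intro power_mono) auto
      moreover have "(\<bar>c\<bar> - 1)^2 = c^2 - 2 * \<bar>c\<bar> + 1"
        by (simp add: power2_diff)
      ultimately have "a^2 \<le> c^2 - 2 * \<bar>c\<bar> + 1" by simp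
      moreover have "\<bar>a^2 - n\<bar> = a^2 - n" using n_neg zero_le_power2[of a] by (simp only: abs_of_nonneg)
      ultimately show ?thesis using c2_le n_neg by linarith
    qed
  qed
qed

lemma exists_half_residue:
  fixes a L :: int
  assumes "0 < L"
  shows "\<exists>m. 2 * \<bar>a + m * L\<bar> \<le> L"
proof -
  define r where "r = a mod L"
  have r: "a + (- (a div L)) * L = r" "0 \<le> r" "r < L"
    using assms unfolding r_def by (simp_all add: minus_div_mult_eq_mod)
  show ?thesis
  proof (cases "2 * r \<le> L")
    case True
    then have "2 * \<bar>a + (- (a div L)) * L\<bar> \<le> L" using r by simp
    then show ?thesis ..
  next
    case False
    have "a + (- (a div L) - 1) * L = r - L" using r(1) by (simp add: algebra_simps)
    then have "2 * \<bar>a + (- (a div L) - 1) * L\<bar> \<le> L" using False r by simp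
    then show ?thesis ..
  qed
qed

lemma dvd_square_shift:
  fixes a c m n :: int
  assumes "c dvd a^2 - n"
  shows "c dvd (a + m * c)^2 - n"
proof -
  have "(a + m * c)^2 - n = (a^2 - n) + c * (2 * a * m + m^2 * c)"
    by (simp add: algebra_simps power2_eq_square)
  with assms show ?thesis by (metis dvd_add dvd_triv_left)
qed

abbreviation quad_point :: "int \<Rightarrow> int \<Rightarrow> int \<Rightarrow> complex" where
  "quad_point n a c \<equiv> (of_int a + csqrt (of_int n)) / of_int c"

lemma int_plus_csqrt_nonzero:
  assumes "\<forall>x::int. x^2 \<noteq> n"
  shows "of_int a + csqrt (of_int n) \<noteq> 0"
proof
  assume "of_int a + csqrt (of_int n) = 0"
  then have "csqrt (of_int n) = - of_int a" by (simp add: eq_neg_iff_add_eq_0 add.commute)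
  then have "(of_int n :: complex) = of_int (a^2)" by (metis power2_csqrt of_int_power power2_minus)
  with assms show False by (metis of_int_eq_iff)
qed

lemma quad_point_add_int:
  "c \<noteq> 0 \<Longrightarrow> quad_point n a c + of_int m = quad_point n (a + m * c) c"
  by (simp add: field_simps)

lemma quad_point_inversion:
  assumes "\<forall>x::int. x^2 \<noteq> n" "c \<noteq> 0" "b * c = a^2 - n"
  shows "- 1 / quad_point n a c = quad_point n (- a) b"
proof -
  let ?s = "csqrt (of_int n)"
  have "b \<noteq> 0" using assms by auto
  have "(of_int (- a) + ?s) * (of_int a + ?s) = of_int n - of_int a ^ 2"
    by (simp add: algebra_simps power2_eq_square[symmetric])
  also have "\<dots> = - (of_int b * of_int c)"
    using arg_cong[OF assms(3), of "of_int :: int \<Rightarrow> complex"] by simp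
  finally have "(of_int (- a) + ?s) * (of_int a + ?s) = - (of_int b * of_int c)" .
  then show ?thesis
    using int_plus_csqrt_nonzero[OF assms(1)] \<open>b \<noteq> 0\<close> assms(2) by (simp add: field_simps)
qed

lemma Qstar_add_int: "z \<in> Qstar n \<Longrightarrow> z + of_int m \<in> Qstar n"
  unfolding Qstar_def using quad_point_add_int dvd_square_shift by blast

lemma Qstar_inversion:
  assumes "\<forall>x::int. x^2 \<noteq> n" "z \<in> Qstar n"
  shows "- 1 / z \<in> Qstar n"
proof -
  obtain a c where "c \<noteq> 0" "c dvd a^2 - n" and z: "z = quad_point n a c"
    using assms(2) unfolding Qstar_def by blast
  then obtain b where bc: "b * c = a^2 - n" by (metis dvd_def mult.commute)
  then have "b \<noteq> 0" "b dvd (- a)^2 - n" using assms(1) by (auto, metis dvd_triv_left)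
  moreover have "- 1 / z = quad_point n (- a) b"
    unfolding z using quad_point_inversion[OF assms(1) \<open>c \<noteq> 0\<close> bc] .
  ultimately show ?thesis unfolding Qstar_def by blast
qed

lemma quad_point_reduce:
  fixes n lam a c :: int
  assumes nonsquare: "\<forall>x::int. x^2 \<noteq> n" and lam: "0 < lam" "lam \<le> 2"
    and "c \<noteq> 0" "c dvd a^2 - n"
  shows "\<exists>a' c'. \<bar>a'\<bar> \<le> \<bar>n\<bar> \<and> \<bar>c'\<bar> \<le> \<bar>n\<bar> \<and> quad_point n a' c' \<in> hecke_orbit lam (quad_point n a c)"
  using assms(4,5)
proof (induction "nat \<bar>c\<bar>" arbitrary: a c rule: less_induct)
  case less
  have "0 < lam * \<bar>c\<bar>" using lam less.prems(1) by simp
  then obtain m where m: "2 * \<bar>a + m * (lam * \<bar>c\<bar>)\<bar> \<le> lam * \<bar>c\<bar>"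
    using exists_half_residue by blast
  define k where "k = m * sgn c"
  define a' where "a' = a + k * lam * c"
  have a'_alt: "a' = a + m * (lam * \<bar>c\<bar>)"
    unfolding a'_def k_def by (simp add: abs_sgn algebra_simps)
  have "2 * \<bar>a'\<bar> \<le> lam * \<bar>c\<bar>" using m unfolding a'_alt .
  moreover have "lam * \<bar>c\<bar> \<le> 2 * \<bar>c\<bar>" using lam by (intro mult_right_mono) auto
  ultimately have a'_le: "\<bar>a'\<bar> \<le> \<bar>c\<bar>" by linarith
  have "quad_point n a' c = (\<lambda>z. z + of_int (k * lam)) (quad_point n a c)"
    unfolding a'_def by (simp only: quad_point_add_int[OF less.prems(1)])
  then have shift: "quad_point n a' c \<in> hecke_orbit lam (quad_point n a c)"
    by (metis hecke_orbit_memI hecke_group_translation)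
  have "c dvd a'^2 - n"
    unfolding a'_def using dvd_square_shift[OF less.prems(2), of "k * lam"] .
  then obtain b where bc: "b * c = a'^2 - n" by (metis dvd_def mult.commute)
  show ?case
  proof (cases "\<bar>c\<bar> \<le> \<bar>b\<bar>")
    case True
    have "n \<noteq> 0" using nonsquare by (metis zero_power2)
    then have "\<bar>c\<bar> \<le> \<bar>n\<bar>" using reduced_triple_bound[OF less.prems(1) _ a'_le True bc] by simp
    then show ?thesis using a'_le shift by (intro exI[of _ a'] exI[of _ c]) simp
  next
    case False
    have "b \<noteq> 0" using bc nonsquare by auto
    moreover have "b dvd (- a')^2 - n" using bc by (metis dvd_triv_left power2_minus)
    moreover have "nat \<bar>b\<bar> < nat \<bar>c\<bar>" using False by simp
    ultimately obtain a'' c'' where "\<bar>a''\<bar> \<le> \<bar>n\<bar>" "\<bar>c''\<bar> \<le> \<bar>n\<bar>"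
      "quad_point n a'' c'' \<in> hecke_orbit lam (quad_point n (- a') b)"
      using less.hyps by blast
    moreover have "quad_point n (- a') b \<in> hecke_orbit lam (quad_point n a' c)"
      unfolding quad_point_inversion[OF nonsquare less.prems(1) bc, symmetric]
      by (rule hecke_orbit_memI[OF hecke_group_inversion])
    ultimately show ?thesis
      using shift hecke_orbit_eq by metis
  qed
qed

lemma finite_hecke_orbits:
  assumes "\<forall>x::int. x^2 \<noteq> n" "0 < lam" "lam \<le> 2"
  shows "finite (hecke_orbits n lam)"
proof -
  let ?B = "{- \<bar>n\<bar>..\<bar>n\<bar>}"
  have "hecke_orbits n lam \<subseteq> (\<lambda>(a, c). hecke_orbit lam (quad_point n a c)) ` (?B \<times> ?B)"
  proof
    fix Y assume "Y \<in> hecke_orbits n lam"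
    then obtain z where "z \<in> Qstar n" and Y: "Y = hecke_orbit lam z"
      unfolding hecke_orbits_def by blast
    then obtain a c where "c \<noteq> 0" "c dvd a^2 - n" and z: "z = quad_point n a c"
      unfolding Qstar_def by blast
    then obtain a' c' where "\<bar>a'\<bar> \<le> \<bar>n\<bar>" "\<bar>c'\<bar> \<le> \<bar>n\<bar>"
      and "quad_point n a' c' \<in> hecke_orbit lam z"
      using quad_point_reduce[OF assms] by blast
    then have "Y = hecke_orbit lam (quad_point n a' c')" "(a', c') \<in> ?B \<times> ?B"
      using hecke_orbit_eq unfolding Y by auto
    then show "Y \<in> (\<lambda>(a, c). hecke_orbit lam (quad_point n a c)) ` (?B \<times> ?B)"
      by (auto intro!: image_eqI[of _ _ "(a', c')"])
  qed
  then show ?thesis by (rule finite_subset) simp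
qed

datatype word_end = Empty_word | Ends_in_inversion | Ends_in_translation

inductive_set reduced_orbit :: "int \<Rightarrow> complex \<Rightarrow> (word_end \<times> complex) set"
  for lam :: int and z0 :: complex where
  empty_word: "(Empty_word, z0) \<in> reduced_orbit lam z0"
| append_inversion: "(e, y) \<in> reduced_orbit lam z0 \<Longrightarrow> e \<noteq> Ends_in_inversion \<Longrightarrow>
    (Ends_in_inversion, - 1 / y) \<in> reduced_orbit lam z0"
| append_translation: "(e, y) \<in> reduced_orbit lam z0 \<Longrightarrow> e \<noteq> Ends_in_translation \<Longrightarrow> k \<noteq> 0 \<Longrightarrow>
    (Ends_in_translation, y + of_int (k * lam)) \<in> reduced_orbit lam z0"

lemma reduced_orbit_inversion:
  assumes "(e, y) \<in> reduced_orbit lam z0"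
  shows "\<exists>e'. (e', - 1 / y) \<in> reduced_orbit lam z0"
proof (cases "e = Ends_in_inversion")
  case True
  with assms obtain e0 y0 where "(e0, y0) \<in> reduced_orbit lam z0" "y = - 1 / y0"
    by (cases rule: reduced_orbit.cases) auto
  then show ?thesis by auto
next
  case False
  with assms show ?thesis by (blast intro: append_inversion)
qed

lemma reduced_orbit_translation:
  assumes "(e, y) \<in> reduced_orbit lam z0"
  shows "\<exists>e'. (e', y + of_int (j * lam)) \<in> reduced_orbit lam z0"
proof (cases "e = Ends_in_translation")
  case True
  with assms obtain e0 y0 k where y0: "(e0, y0) \<in> reduced_orbit lam z0" "e0 \<noteq> Ends_in_translation"
    and y: "y = y0 + of_int (k * lam)"
    by (cases rule: reduced_orbit.cases) auto
  have shift: "y + of_int (j * lam) = y0 + of_int ((k + j) * lam)"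
    unfolding y by (simp add: algebra_simps)
  show ?thesis
  proof (cases "k + j = 0")
    case True
    with y0 show ?thesis unfolding shift by auto
  next
    case False
    with y0 show ?thesis unfolding shift by (blast intro: append_translation)
  qed
next
  case False
  show ?thesis
  proof (cases "j = 0")
    case True
    with assms show ?thesis by auto
  next
    case False
    with assms \<open>e \<noteq> Ends_in_translation\<close> show ?thesis by (blast intro: append_translation)
  qed
qed

lemma hecke_orbit_in_reduced_orbit:
  "g \<in> hecke_group lam \<Longrightarrow> \<exists>e. (e, g z0) \<in> reduced_orbit lam z0"
proof (induction g rule: hecke_group.induct)
  case hg_id
  show ?case using empty_word by auto
next
  case (hg_x g)
  then show ?case using reduced_orbit_inversion by auto
next
  case (hg_w g)
  then show ?case using reduced_orbit_translation[where j = 1] by auto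
next
  case (hg_winv g)
  then show ?case using reduced_orbit_translation[where j = "- 1"] by auto
qed

definition strip :: "complex set" where
  "strip = {z. 1 < Re z \<and> Re z < 2}"

lemma reduced_orbit_ping_pong:
  assumes lam: "3 \<le> \<bar>lam\<bar>" and z0: "z0 \<in> strip"
  shows "(e, y) \<in> reduced_orbit lam z0 \<Longrightarrow>
    (case e of Empty_word \<Rightarrow> y = z0
             | Ends_in_inversion \<Rightarrow> cmod y < 1
             | Ends_in_translation \<Rightarrow> Re y < - 1 \<or> 2 < Re y)"
proof (induction rule: reduced_orbit.induct)
  case empty_word
  show ?case by simp
next
  case (append_inversion e y)
  have "1 < \<bar>Re y\<bar>"
    using append_inversion z0 unfolding strip_def by (cases e) auto
  then have "1 < cmod y" using abs_Re_le_cmod[of y] by linarith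
  then show ?case by (simp add: norm_divide divide_less_eq)
next
  case (append_translation e y k)
  have "1 * 3 \<le> \<bar>k\<bar> * \<bar>lam\<bar>"
    using lam append_translation(3) by (intro mult_mono) auto
  then have "3 \<le> k * lam \<or> k * lam \<le> - 3"
    unfolding abs_mult[symmetric] by arith
  then have "3 \<le> real_of_int (k * lam) \<or> real_of_int (k * lam) \<le> - 3"
    by (metis of_int_le_iff of_int_numeral of_int_neg_numeral)
  moreover have "- 1 < Re y \<and> Re y < 2"
    using append_translation z0 abs_Re_le_cmod[of y] unfolding strip_def by (cases e) auto
  ultimately show ?case by auto
qed

lemma strip_hecke_orbit_unique:
  assumes "3 \<le> \<bar>lam\<bar>" "z1 \<in> strip" "z2 \<in> strip" "z2 \<in> hecke_orbit lam z1"
  shows "z2 = z1"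
proof -
  obtain g where "g \<in> hecke_group lam" "z2 = g z1"
    using assms(4) unfolding hecke_orbit_def by blast
  then obtain e where "(e, z2) \<in> reduced_orbit lam z1"
    using hecke_orbit_in_reduced_orbit by blast
  from reduced_orbit_ping_pong[OF assms(1,2) this] assms(3) show ?thesis
    using abs_Re_le_cmod[of z2] unfolding strip_def by (cases e) auto
qed

lemma Re_csqrt_of_int_le: "Re (csqrt (of_int n)) \<le> \<bar>of_int n\<bar>"
proof -
  have "Re (csqrt (of_int n)) \<le> sqrt \<bar>of_int n\<bar>"
    using complex_Re_le_cmod[of "csqrt (of_int n)"] by simp
  also have "\<dots> \<le> \<bar>of_int n\<bar>"
  proof (rule real_le_lsqrt)
    have "\<bar>n\<bar> \<le> \<bar>n\<bar>^2" using self_le_power[of "\<bar>n\<bar>" 2] by (cases "n = 0") auto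
    then show "\<bar>real_of_int n\<bar> \<le> \<bar>real_of_int n\<bar>^2" by (metis of_int_abs of_int_le_iff of_int_power)
  qed simp
  finally show ?thesis .
qed

lemma Re_inverse_bounds:
  assumes "1 < Re w"
  shows "0 < Re (1 / w)" "Re (1 / w) < 1"
proof -
  have "Re w < (Re w)^2" using assms by (simp add: power2_eq_square)
  also have "\<dots> \<le> (cmod w)^2" using assms abs_Re_le_cmod[of w] by (simp add: abs_le_square_iff)
  finally have "Re w < (cmod w)^2" .
  moreover have "Re (1 / w) = Re w / (cmod w)^2" by (simp add: Re_divide')
  moreover have "0 < (cmod w)^2" using \<open>Re w < (cmod w)^2\<close> assms by linarith
  ultimately show "0 < Re (1 / w)" "Re (1 / w) < 1" using assms by (simp_all add: divide_less_eq)
qed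

lemma one_plus_inverse_in_strip:
  assumes "\<bar>n\<bar> + 2 \<le> r"
  shows "1 + 1 / (of_int r - csqrt (of_int n)) \<in> strip"
proof -
  have "1 < Re (of_int r - csqrt (of_int n))"
    using Re_csqrt_of_int_le[of n] assms by simp
  then show ?thesis
    using Re_inverse_bounds unfolding strip_def by simp
qed

lemma one_plus_inverse_in_Qstar:
  assumes "\<forall>x::int. x^2 \<noteq> n"
  shows "1 + 1 / (of_int r - csqrt (of_int n)) \<in> Qstar n"
proof -
  have "quad_point n (- r) 1 \<in> Qstar n" unfolding Qstar_def by fastforce
  then have "- 1 / quad_point n (- r) 1 + of_int 1 \<in> Qstar n"
    by (intro Qstar_add_int Qstar_inversion[OF assms])
  moreover have "- 1 / quad_point n (- r) 1 = 1 / (of_int r - csqrt (of_int n))"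
    by (metis minus_diff_eq minus_divide_divide of_int_minus of_int_1 div_by_1 uminus_add_conv_diff)
  ultimately show ?thesis by (simp only: add.commute of_int_1)
qed

lemma infinite_hecke_orbits:
  assumes "\<forall>x::int. x^2 \<noteq> n" "3 \<le> \<bar>lam\<bar>"
  shows "infinite (hecke_orbits n lam)"
proof -
  define f :: "int \<Rightarrow> complex" where "f r = 1 + 1 / (of_int r - csqrt (of_int n))" for r
  let ?A = "{\<bar>n\<bar> + 2..}"
  have f_A: "f r \<in> Qstar n \<inter> strip" if "r \<in> ?A" for r
    using that one_plus_inverse_in_strip one_plus_inverse_in_Qstar[OF assms(1)] unfolding f_def by auto
  have "inj_on (hecke_orbit lam \<circ> f) ?A"
  proof (rule inj_onI)
    fix r s assume "r \<in> ?A" "s \<in> ?A" "(hecke_orbit lam \<circ> f) r = (hecke_orbit lam \<circ> f) s"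
    then have "f r = f s"
      using f_A strip_hecke_orbit_unique[OF assms(2)] hecke_orbit_self by (metis IntD2 comp_apply)
    then show "r = s" unfolding f_def by simp
  qed
  then have "infinite ((hecke_orbit lam \<circ> f) ` ?A)"
    using finite_imageD infinite_Ici by blast
  moreover have "(hecke_orbit lam \<circ> f) ` ?A \<subseteq> hecke_orbits n lam"
    using f_A unfolding hecke_orbits_def by auto
  ultimately show ?thesis by (metis infinite_super)
qed

theorem theorem1p4:
  fixes n lam :: int
  assumes "squarefree n" and "n \<noteq> 1" and "lam \<ge> 1"
  shows "finite (hecke_orbits n lam) \<longleftrightarrow> lam \<in> {1, 2}"
proof -
  have nonsquare: "\<forall>x::int. x^2 \<noteq> n" using squarefree_not_square assms(1,2) by blast
  show ?thesis
  proof
    assume "finite (hecke_orbits n lam)"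
    then have "\<not> 3 \<le> \<bar>lam\<bar>" using infinite_hecke_orbits[OF nonsquare] by blast
    with assms(3) show "lam \<in> {1, 2}" by auto
  next
    assume "lam \<in> {1, 2}"
    then show "finite (hecke_orbits n lam)" using finite_hecke_orbits[OF nonsquare] by auto
  qed
qed

end
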